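(* Let $\varphi=\frac{1+\sqrt5}{2}$, $F_n=\frac{\varphi^n-(-1/\varphi)^n}{\varphi+1/\varphi}$, $F_0!=1$, $F_n!=F_1\cdots F_n$. For commuting variables $x,y$ and $n\ge1$ define the Golden binomial $$(x+y)_F^n=\prod_{k=0}^{n-1}\big(x+(-1)^k\varphi^{\,n-1-2k}y\big)=(x+\varphi^{n-1}y)(x-\varphi^{n-3}y)\cdots(x+(-1)^{n-1}\varphi^{-n+1}y),$$ and $(x+y)_F^0=1$. Then for every $n\ge0$, $$(x+y)_F^n=\sum_{k=0}^n\frac{F_n!}{F_{n-k}!\,F_k!}(-1)^{\frac{k(k-1)}2}x^{n-k}y^k.$$ *)

theory Defs
  imports Complex_Main
begin

definition golden :: real where "golden = (1 + sqrt 5) / 2"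

definition fibo :: "nat \<Rightarrow> real" where
  "fibo n = (golden ^ n - (- 1 / golden) ^ n) / (golden + 1 / golden)"

definition fibo_fact :: "nat \<Rightarrow> real" where
  "fibo_fact n = (\<Prod>i=1..n. fibo i)"

definition golden_binom :: "real \<Rightarrow> real \<Rightarrow> nat \<Rightarrow> real" where
  "golden_binom x y n =
     (\<Prod>k=0..<n. x + (-1) ^ k * golden powi (int n - 1 - 2 * int k) * y)"

end

theory Submission
  imports Defs
begin

(* The golden binomial is the (p,q)-binomial (x + y)^n_{p,q} = prod_{k<n} (x + p^(n-1-k) q^k y)
   for p = phi and q = -1/phi, whose (p,q)-numbers [n] = (p^n - q^n)/(p - q) are the Fibonacci
   numbers. Splitting off the last factor, (x + y)^(n+1)_{p,q} = (x + q^n y) (x + p y)^n_{p,q},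
   so the coefficients obey the (p,q)-Pascal rule [n+1,k+1] = p^(k+1) [n,k+1] + q^(n-k) [n,k],
   twisted by the factor (p q)^(k(k-1)/2). The quotients [n]!/([n-k]! [k]!) obey the same rule
   because [n+1] = p^(k+1) [n-k] + q^(n-k) [k+1]. Finally p q = -1 turns the twist into the
   sign (-1)^(k(k-1)/2). *)

primrec pq_number :: "'a::comm_ring_1 \<Rightarrow> 'a \<Rightarrow> nat \<Rightarrow> 'a" where
  "pq_number p q 0 = 0"
| "pq_number p q (Suc n) = p ^ n + q * pq_number p q n"

primrec pq_factorial :: "'a::comm_ring_1 \<Rightarrow> 'a \<Rightarrow> nat \<Rightarrow> 'a" where
  "pq_factorial p q 0 = 1"
| "pq_factorial p q (Suc n) = pq_factorial p q n * pq_number p q (Suc n)"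

(* Defined by the Pascal rule rather than as a quotient, so that it lives in any commutative ring. *)
fun pq_binomial :: "'a::comm_ring_1 \<Rightarrow> 'a \<Rightarrow> nat \<Rightarrow> nat \<Rightarrow> 'a" where
  "pq_binomial p q n 0 = 1"
| "pq_binomial p q 0 (Suc k) = 0"
| "pq_binomial p q (Suc n) (Suc k) =
     p ^ Suc k * pq_binomial p q n (Suc k) + q ^ (n - k) * pq_binomial p q n k"

definition pq_power :: "'a::comm_ring_1 \<Rightarrow> 'a \<Rightarrow> 'a \<Rightarrow> 'a \<Rightarrow> nat \<Rightarrow> 'a" where
  "pq_power p q x y n = (\<Prod>k=0..<n. x + p ^ (n - 1 - k) * q ^ k * y)"

lemma pq_number_add: "pq_number p q (k + m) = p ^ k * pq_number p q m + q ^ m * pq_number p q k"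
  by (induction m) (simp_all add: algebra_simps power_add)

lemma diff_mult_pq_number: "(p - q) * pq_number p q n = p ^ n - q ^ n"
proof (induction n)
  case (Suc n)
  have "(p - q) * pq_number p q (Suc n) = (p - q) * p ^ n + q * ((p - q) * pq_number p q n)"
    by (simp add: algebra_simps)
  also have "\<dots> = (p - q) * p ^ n + q * (p ^ n - q ^ n)"
    by (simp only: Suc.IH)
  finally show ?case
    by (simp add: algebra_simps)
qed simp

lemma pq_binomial_eq_0: "n < k \<Longrightarrow> pq_binomial p q n k = 0"
  by (induction p q n k rule: pq_binomial.induct) simp_all

lemma pq_binomial_diag: "pq_binomial p q n n = 1"
  by (induction n) (simp_all add: pq_binomial_eq_0)

lemma pq_binomial_factorial:
  "k \<le> n \<Longrightarrow>
     pq_binomial p q n k * pq_factorial p q (n - k) * pq_factorial p q k = pq_factorial p q n"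
proof (induction p q n k rule: pq_binomial.induct)
  case (3 p q n k)
  show ?case
  proof (cases "k = n")
    case True
    then show ?thesis by (simp add: pq_binomial_diag pq_binomial_eq_0)
  next
    case False
    with "3.prems" have "k < n" by simp
    define m where "m = n - Suc k"
    have n_minus_k: "n - k = Suc m" and n_eq: "Suc n = Suc k + Suc m"
      using \<open>k < n\<close> by (simp_all add: m_def)
    let ?f = "pq_factorial p q"
    have left: "pq_binomial p q n (Suc k) * ?f m * ?f (Suc k) = ?f n"
      using "3.IH"(1) \<open>k < n\<close> by (simp add: m_def)
    have right: "pq_binomial p q n k * ?f (Suc m) * ?f k = ?f n"
      using "3.IH"(2) \<open>k < n\<close> n_minus_k by simp
    have "pq_binomial p q (Suc n) (Suc k) * ?f (Suc m) * ?f (Suc k)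
        = p ^ Suc k * pq_number p q (Suc m) * (pq_binomial p q n (Suc k) * ?f m * ?f (Suc k))
          + q ^ Suc m * pq_number p q (Suc k) * (pq_binomial p q n k * ?f (Suc m) * ?f k)"
      using n_minus_k by (simp add: algebra_simps)
    also have "\<dots> = ?f n * pq_number p q (Suc n)"
      unfolding left right n_eq pq_number_add by (simp add: algebra_simps)
    finally show ?thesis
      using n_minus_k by simp
  qed
qed simp_all

lemma pq_power_Suc: "pq_power p q x y (Suc n) = (x + q ^ n * y) * pq_power p q x (p * y) n"
proof -
  have "pq_power p q x y (Suc n)
      = (\<Prod>k=0..<n. x + p ^ (n - k) * q ^ k * y) * (x + q ^ n * y)"
    by (simp add: pq_power_def)
  also have "(\<Prod>k=0..<n. x + p ^ (n - k) * q ^ k * y) = pq_power p q x (p * y) n"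
    unfolding pq_power_def
    by (intro prod.cong refl) (simp add: Suc_diff_Suc[symmetric] del: Suc_diff_Suc)
  finally show ?thesis
    by (simp add: mult.commute)
qed

lemma triangular_Suc: "Suc k * (Suc k - 1) div 2 = k * (k - 1) div 2 + k"
  by (cases k) simp_all

lemma pq_binomial_Suc_Suc_signed:
  fixes p q :: "'a::comm_ring_1"
  assumes "k \<le> n"
  defines "t \<equiv> \<lambda>k. (p * q) ^ (k * (k - 1) div 2)"
  shows "pq_binomial p q (Suc n) (Suc k) * t (Suc k)
    = p ^ Suc k * pq_binomial p q n (Suc k) * t (Suc k) + q ^ n * p ^ k * pq_binomial p q n k * t k"
proof -
  have "q ^ n = q ^ k * q ^ (n - k)"
    using assms(1) by (simp add: power_add[symmetric])
  moreover have "t (Suc k) = p ^ k * q ^ k * t k"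
    unfolding t_def triangular_Suc by (simp add: power_add power_mult_distrib)
  ultimately show ?thesis
    by (simp add: algebra_simps)
qed

lemma pq_binomial_expansion_Suc:
  fixes p q x y :: "'a::comm_ring_1"
  defines "t \<equiv> \<lambda>k. (p * q) ^ (k * (k - 1) div 2)"
  shows "(\<Sum>k=0..Suc n. pq_binomial p q (Suc n) k * t k * x ^ (Suc n - k) * y ^ k)
    = (x + q ^ n * y) * (\<Sum>k=0..n. pq_binomial p q n k * t k * x ^ (n - k) * (p * y) ^ k)"
    (is "?lhs = _ * ?S")
proof -
  let ?c = "pq_binomial p q"
  define a where "a k = p ^ Suc k * ?c n (Suc k) * t (Suc k) * x ^ (n - k) * y ^ Suc k" for k
  define b where "b k = q ^ n * p ^ k * ?c n k * t k * x ^ (n - k) * y ^ Suc k" for k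
  have "?lhs = x ^ Suc n + (\<Sum>k=0..n. ?c (Suc n) (Suc k) * t (Suc k) * x ^ (n - k) * y ^ Suc k)"
    by (subst sum.atLeast0_atMost_Suc_shift) (simp add: t_def)
  also have "(\<Sum>k=0..n. ?c (Suc n) (Suc k) * t (Suc k) * x ^ (n - k) * y ^ Suc k)
      = (\<Sum>k=0..n. a k + b k)"
  proof (intro sum.cong refl)
    fix k assume "k \<in> {0..n}"
    then have "?c (Suc n) (Suc k) * t (Suc k)
        = p ^ Suc k * ?c n (Suc k) * t (Suc k) + q ^ n * p ^ k * ?c n k * t k"
      using pq_binomial_Suc_Suc_signed[of k n p q] unfolding t_def by simp
    then show "?c (Suc n) (Suc k) * t (Suc k) * x ^ (n - k) * y ^ Suc k = a k + b k"
      unfolding a_def b_def by (simp only: distrib_right)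
  qed
  also have "x ^ Suc n + (\<Sum>k=0..n. a k + b k) = x * ?S + q ^ n * y * ?S"
  proof -
    have "x * ?S = (\<Sum>k=0..Suc n. ?c n k * t k * p ^ k * x ^ (Suc n - k) * y ^ k)"
      by (simp add: sum_distrib_left sum.atLeast0_atMost_Suc pq_binomial_eq_0 Suc_diff_le
          power_mult_distrib algebra_simps)
    also have "\<dots> = x ^ Suc n + (\<Sum>k=0..n. a k)"
      by (subst sum.atLeast0_atMost_Suc_shift) (simp add: a_def t_def algebra_simps)
    finally have "x * ?S = x ^ Suc n + (\<Sum>k=0..n. a k)" .
    moreover have "q ^ n * y * ?S = (\<Sum>k=0..n. b k)"
      by (simp add: sum_distrib_left b_def power_mult_distrib algebra_simps)
    ultimately show ?thesis
      by (simp add: sum.distrib)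
  qed
  finally show ?thesis
    by (simp add: algebra_simps)
qed

theorem pq_binomial_theorem:
  fixes p q x y :: "'a::comm_ring_1"
  shows "pq_power p q x y n
    = (\<Sum>k=0..n. pq_binomial p q n k * (p * q) ^ (k * (k - 1) div 2) * x ^ (n - k) * y ^ k)"
proof (induction n arbitrary: y)
  case 0
  then show ?case by (simp add: pq_power_def)
next
  case (Suc n)
  then show ?case
    by (simp only: pq_power_Suc pq_binomial_expansion_Suc)
qed

lemma pq_binomial_eq_divide:
  fixes p q :: "'a::field"
  assumes "k \<le> n" "pq_factorial p q (n - k) \<noteq> 0" "pq_factorial p q k \<noteq> 0"
  shows "pq_binomial p q n k = pq_factorial p q n / (pq_factorial p q (n - k) * pq_factorial p q k)"
  using pq_binomial_factorial[OF assms(1), of p q] assms(2,3)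
  by (simp add: field_simps)

lemma power_int_alternating:
  fixes p :: "'a::field"
  assumes "p \<noteq> 0" "k < n"
  shows "(-1) ^ k * p powi (int n - 1 - 2 * int k) = p ^ (n - 1 - k) * (-1 / p) ^ k"
proof -
  have exponent: "int n - 1 - 2 * int k = int (n - 1 - k) - int k"
    using assms(2) by (simp add: of_nat_diff)
  have "p powi (int n - 1 - 2 * int k) = p powi int (n - 1 - k) / p powi int k"
    unfolding exponent using assms(1) by (intro power_int_diff) simp
  also have "\<dots> = p ^ (n - 1 - k) / p ^ k"
    by (simp only: power_int_of_nat)
  finally show ?thesis
    unfolding power_divide by simp
qed

lemma golden_gt_1: "golden > 1"
proof -
  have "sqrt 5 > 1"
    by (simp add: real_less_rsqrt)
  then show ?thesis
    unfolding golden_def by simp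
qed

lemma golden_times_conjugate: "golden * (-1 / golden) = -1"
  using golden_gt_1 by simp

lemma golden_binom_eq_pq_power: "golden_binom x y n = pq_power golden (-1 / golden) x y n"
  unfolding golden_binom_def pq_power_def
  using golden_gt_1 by (intro prod.cong refl) (simp add: power_int_alternating)

lemma golden_plus_inverse_pos: "golden + 1 / golden > 0"
  using golden_gt_1 by (simp add: add_pos_pos)

lemma golden_conjugate_power_le_1: "(-1 / golden) ^ n \<le> 1"
proof (rule abs_le_D1)
  show "\<bar>(-1 / golden) ^ n\<bar> \<le> 1"
    unfolding power_abs using golden_gt_1 by (intro power_le_one) simp_all
qed

lemma fibo_eq_pq_number: "fibo n = pq_number golden (-1 / golden) n"
  using diff_mult_pq_number[of golden "-1 / golden" n] golden_plus_inverse_pos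
  unfolding fibo_def by (simp add: field_simps)

lemma fibo_nonzero:
  assumes "n \<ge> 1"
  shows "fibo n \<noteq> 0"
proof
  assume "fibo n = 0"
  then have "golden ^ n = (-1 / golden) ^ n"
    using golden_plus_inverse_pos unfolding fibo_def divide_eq_0_iff by simp
  moreover have "golden ^ n > 1"
    using golden_gt_1 assms by (intro one_less_power) simp_all
  ultimately show False
    using golden_conjugate_power_le_1[of n] by linarith
qed

lemma fibo_fact_eq_pq_factorial: "fibo_fact n = pq_factorial golden (-1 / golden) n"
  by (induction n) (simp_all add: fibo_fact_def prod.nat_ivl_Suc' fibo_eq_pq_number)

lemma fibo_fact_nonzero: "fibo_fact n \<noteq> 0"
  unfolding fibo_fact_def using fibo_nonzero by simp

theorem mainTheorem10:
  fixes x y :: real and n :: nat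
  shows "golden_binom x y n =
    (\<Sum>k=0..n. fibo_fact n / (fibo_fact (n - k) * fibo_fact k)
        * (-1) ^ (k * (k - 1) div 2) * x ^ (n - k) * y ^ k)"
proof -
  have coefficient: "pq_binomial golden (-1 / golden) n k
      = fibo_fact n / (fibo_fact (n - k) * fibo_fact k)" if "k \<in> {0..n}" for k
    using that pq_binomial_eq_divide[of k n golden "-1 / golden"]
      fibo_fact_nonzero[of "n - k"] fibo_fact_nonzero[of k]
    unfolding fibo_fact_eq_pq_factorial by simp
  show ?thesis
    unfolding golden_binom_eq_pq_power pq_binomial_theorem golden_times_conjugate
    by (rule sum.cong[OF refl]) (simp only: coefficient)
qed

end
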